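(* For $\gamma\in(1,2)$ let $C_\zeta(\gamma)=(\sum_{j=1}^\infty j^{-\gamma})^{-1}$ and define the probability distribution $\{\mathrm{p}_j\}_{j=1}^\infty$ on $\mathbb{N}$ by $\mathrm{p}_{2j-1}=\mathrm{p}_{2j}=\tfrac12 C_\zeta(\gamma)j^{-\gamma}$. Fix $\theta\in\mathbb{N}$ and let $X_1,\dots,X_\theta$ be i.i.d. with this distribution. Let $S$ be the random set of values of $X_1,\dots,X_\theta$, enumerated as $S=\{Z_1,\dots,Z_N\}$ with $Z_1<\dots<Z_N$ (so $N\leq\theta$ is the number of distinct values). Set $c_1=(1-e^{-C_\zeta(\gamma)})/2$ and $c_2=C_\zeta(\gamma)/(\gamma-1)$. Then (i) $\mathbb{P}(N\geq c_1\theta^{1/\gamma})\geq 1-c_1^{-2}\theta^{-(2/\gamma-1)}$; (ii) $\mathbb{P}(\max S\leq n)\geq 1-c_2\,\theta\lfloor n/2\rfloor^{1-\gamma}$ for all $n\in\mathbb{N}$; (iii) $\mathbb{P}\big(\sum_{j=1}^{N-1}\chi_{\{Z_{j+1}-Z_j\text{ odd}\}}\leq n/5\,\big|\,N=n\big)\leq e^{-n/100}$ for all integers $n$ with $10\leq n\leq\theta$.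
   Context: $\chi_E$ denotes the indicator of the event $E$. *)

theory Defs
  imports "HOL-Probability.Probability"
begin

definition Czeta :: "real \<Rightarrow> real" where
  "Czeta \<gamma> = inverse (\<Sum>j. real (Suc j) powr (- \<gamma>))"

text \<open>p_{2j-1} = p_{2j} = C_zeta(gamma) j^(-gamma) / 2 for j >= 1; p_0 = 0 (0 is not in the support).\<close>
definition pj :: "real \<Rightarrow> nat \<Rightarrow> real" where
  "pj \<gamma> k = (if k = 0 then 0 else Czeta \<gamma> / 2 * real ((k + 1) div 2) powr (- \<gamma>))"

definition zdist :: "real \<Rightarrow> nat pmf" where
  "zdist \<gamma> = embed_pmf (pj \<gamma>)"

text \<open>Joint law of X_1..X_theta i.i.d. (indexed by 0..theta-1).\<close>
definition sample :: "real \<Rightarrow> nat \<Rightarrow> (nat \<Rightarrow> nat) pmf" where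
  "sample \<gamma> \<theta> = Pi_pmf {..<\<theta>} 0 (\<lambda>_. zdist \<gamma>)"

definition valset :: "nat \<Rightarrow> (nat \<Rightarrow> nat) \<Rightarrow> nat set" where
  "valset \<theta> X = X ` {..<\<theta>}"

definition Nval :: "nat \<Rightarrow> (nat \<Rightarrow> nat) \<Rightarrow> nat" where
  "Nval \<theta> X = card (valset \<theta> X)"

text \<open>Z_1 < ... < Z_N is sorted_list_of_set (valset), 0-indexed; count of j in 1..N-1 with Z_{j+1}-Z_j odd.\<close>
definition oddgaps :: "nat \<Rightarrow> (nat \<Rightarrow> nat) \<Rightarrow> nat" where
  "oddgaps \<theta> X = (let zs = sorted_list_of_set (valset \<theta> X) in
      card {j. j + 1 < length zs \<and> odd (zs ! (j + 1) - zs ! j)})"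

end

theory Submission
  imports Defs
begin

text \<open>
  (i) is a second moment argument. With C = Czeta \<gamma>, every value k \<le> 2 \<lfloor>\<theta> powr (1/\<gamma>)\<rfloor> has
  probability at least C/(2\<theta>), so it is hit with probability at least 1 - exp (-C/2), and the
  expected number of hit values in this range is at least 2 c1 \<theta> powr (1/\<gamma>). The events that
  two distinct values are missed are negatively correlated, so the number of missed values has
  variance at most the expected number of hit values, and Chebyshev's inequality applies.

  (ii) is a union bound over the \<theta> samples with the tail estimate
  \<open>\<Sum>j\<ge>m. (j + 1) powr (-\<gamma>) \<le> m powr (1 - \<gamma>) / (\<gamma> - 1)\<close>, a comparison with the integral.

  (iii) rests on the symmetry p (2j-1) = p (2j). Exchanging 2j-1 and 2j for all j in a set A
  preserves the law of the sample and the number of distinct values, so the conditional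
  probability can be bounded by averaging over all A with the set S of values fixed. If S
  contains many complete pairs {2j-1, 2j}, each of them is an odd gap. Otherwise at least 3n/5
  values of S are alone in their pair; for a uniformly random A their parities are independent
  fair coins, the parity changes along them are odd gaps, and their number is binomial, so
  Hoeffding's inequality gives the bound exp (-n/100). To make the family of flips finite, the
  values are first confined to {1..2m}; the error of this truncation vanishes as m \<rightarrow> \<infinity>.
\<close>

lemma summable_Suc_powr_neg:
  fixes \<gamma> :: real
  assumes "1 < \<gamma>"
  shows "summable (\<lambda>j. real (Suc j) powr (- \<gamma>))"
  using assms summable_iff_shift[of "\<lambda>n. real n powr (- \<gamma>)" 1]
  by (simp add: summable_real_powr_iff)

lemma powr_neg_le_diff_powr:
  fixes \<gamma> x :: real
  assumes "1 < \<gamma>" "0 < x"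
  shows "(x + 1) powr (- \<gamma>) \<le> (x powr (1 - \<gamma>) - (x + 1) powr (1 - \<gamma>)) / (\<gamma> - 1)"
proof -
  have "\<exists>z>x. z < x + 1 \<and>
      (x + 1) powr (1 - \<gamma>) - x powr (1 - \<gamma>) = (x + 1 - x) * ((1 - \<gamma>) * z powr (1 - \<gamma> - 1))"
  proof (rule MVT2)
    fix y assume "x \<le> y"
    with assms(2) show "((\<lambda>a. a powr (1 - \<gamma>)) has_real_derivative (1 - \<gamma>) * y powr (1 - \<gamma> - 1)) (at y)"
      by (intro has_real_derivative_powr) auto
  qed simp
  then obtain z where z: "x < z" "z < x + 1"
    and mvt: "(x + 1) powr (1 - \<gamma>) - x powr (1 - \<gamma>) = (1 - \<gamma>) * z powr (- \<gamma>)"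
    by auto
  have "(x + 1) powr (- \<gamma>) \<le> z powr (- \<gamma>)"
    using assms z by (intro powr_mono2') auto
  then have "(\<gamma> - 1) * (x + 1) powr (- \<gamma>) \<le> (\<gamma> - 1) * z powr (- \<gamma>)"
    using assms(1) by (intro mult_left_mono) auto
  with mvt assms(1) show ?thesis
    by (simp add: pos_le_divide_eq algebra_simps)
qed

lemma suminf_Suc_powr_neg_tail_le:
  fixes \<gamma> :: real
  assumes "1 < \<gamma>" "1 \<le> m"
  shows "(\<Sum>j. real (Suc (j + m)) powr (- \<gamma>)) \<le> real m powr (1 - \<gamma>) / (\<gamma> - 1)"
proof -
  define f where "f = (\<lambda>j. real (j + m) powr (1 - \<gamma>) / (\<gamma> - 1))"
  have "filterlim (\<lambda>j. real (j + m)) at_top sequentially"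
    by real_asymp
  then have "(\<lambda>j. real (j + m) powr (1 - \<gamma>)) \<longlonglongrightarrow> 0"
    using assms(1) by (intro tendsto_neg_powr) auto
  then have "f \<longlonglongrightarrow> 0"
    unfolding f_def by (auto intro: tendsto_divide_zero)
  then have telescope: "(\<lambda>j. f j - f (Suc j)) sums f 0"
    using telescope_sums'[of f 0] by simp
  have "real (Suc (j + m)) powr (- \<gamma>) \<le> f j - f (Suc j)" for j
    using powr_neg_le_diff_powr[OF assms(1), of "real (j + m)"] assms(2)
    by (simp add: f_def diff_divide_distrib add.commute del: of_nat_add)
  moreover have "summable (\<lambda>j. real (Suc (j + m)) powr (- \<gamma>))"
    using summable_Suc_powr_neg[OF assms(1)] summable_iff_shift[of "\<lambda>j. real (Suc j) powr (- \<gamma>)" m]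
    by simp
  ultimately have "(\<Sum>j. real (Suc (j + m)) powr (- \<gamma>)) \<le> (\<Sum>j. f j - f (Suc j))"
    using telescope by (intro suminf_le) (auto simp: sums_iff)
  with telescope show ?thesis
    by (simp add: sums_iff f_def)
qed

lemma pow_one_minus_le_exp:
  fixes p :: real
  assumes "0 \<le> p" "p \<le> 1"
  shows "(1 - p) ^ n \<le> exp (- (real n * p))"
proof -
  have "(1 - p) ^ n \<le> exp (- p) ^ n"
    using assms exp_ge_add_one_self[of "- p"] by (intro power_mono) auto
  then show ?thesis by (simp flip: exp_of_nat_mult)
qed

lemma prob_Pi_pmf_component:
  assumes "finite I" "i \<in> I"
  shows "measure_pmf.prob (Pi_pmf I dflt (\<lambda>_. q)) {X. X i \<in> B} = measure_pmf.prob q B"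
proof -
  have "measure_pmf.prob (Pi_pmf I dflt (\<lambda>_. q)) {X. X i \<in> B}
      = measure_pmf.prob (map_pmf (\<lambda>X. X i) (Pi_pmf I dflt (\<lambda>_. q))) B"
    by (simp add: vimage_def)
  with assms show ?thesis
    by (simp add: Pi_pmf_component)
qed

lemma prob_Pi_pmf_ex_le:
  assumes "finite I"
  shows "measure_pmf.prob (Pi_pmf I dflt (\<lambda>_. q)) {X. \<exists>i\<in>I. X i \<in> B}
           \<le> real (card I) * measure_pmf.prob q B"
proof -
  have "{X. \<exists>i\<in>I. X i \<in> B} = (\<Union>i\<in>I. {X. X i \<in> B})" by auto
  then have "measure_pmf.prob (Pi_pmf I dflt (\<lambda>_. q)) {X. \<exists>i\<in>I. X i \<in> B}
      \<le> (\<Sum>i\<in>I. measure_pmf.prob (Pi_pmf I dflt (\<lambda>_. q)) {X. X i \<in> B})"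
    using assms by (simp only:) (rule measure_pmf.finite_measure_subadditive_finite, auto)
  also have "\<dots> = (\<Sum>i\<in>I. measure_pmf.prob q B)"
    using assms by (intro sum.cong refl prob_Pi_pmf_component)
  finally show ?thesis by simp
qed

lemma prob_Pi_pmf_all_notin:
  assumes "finite I"
  shows "measure_pmf.prob (Pi_pmf I dflt (\<lambda>_. q)) {X. \<forall>i\<in>I. X i \<notin> B}
           = measure_pmf.prob q (- B) ^ card I"
proof -
  have "{X. \<forall>i\<in>I. X i \<notin> B} = Pi I (\<lambda>_. - B)" by (auto simp: Pi_def)
  with assms show ?thesis by (simp add: measure_Pi_pmf_Pi)
qed

lemma integrable_measure_pmf_indicator [simp]:
  "integrable (measure_pmf p) (indicator A :: 'a \<Rightarrow> real)"
  by (rule measure_pmf.integrable_const_bound[where B = 1]) (auto simp: indicator_def)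

lemma variance_sum_indicators_le:
  fixes p :: "'a pmf" and M :: "'b \<Rightarrow> 'a set"
  assumes "finite I"
    and neg_corr: "\<And>k l. k \<in> I \<Longrightarrow> l \<in> I \<Longrightarrow> k \<noteq> l \<Longrightarrow>
           measure_pmf.prob p (M k \<inter> M l) \<le> measure_pmf.prob p (M k) * measure_pmf.prob p (M l)"
  shows "measure_pmf.variance p (\<lambda>x. \<Sum>k\<in>I. indicator (M k) x)
           \<le> (\<Sum>k\<in>I. measure_pmf.prob p (M k) * (1 - measure_pmf.prob p (M k)))"
proof -
  let ?P = "measure_pmf.prob p"
  define S where "S = (\<lambda>x. \<Sum>k\<in>I. indicator (M k) x :: real)"
  have S_sq: "(S x)\<^sup>2 = (\<Sum>k\<in>I. \<Sum>l\<in>I. indicator (M k \<inter> M l) x)" for x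
    unfolding S_def power2_eq_square sum_product by (intro sum.cong refl) (auto simp: indicator_def)
  have "integrable (measure_pmf p) S"
    by (simp add: S_def)
  moreover have "integrable (measure_pmf p) (\<lambda>x. (S x)\<^sup>2)"
    unfolding S_sq by (intro Bochner_Integration.integrable_sum) simp
  ultimately have "measure_pmf.variance p S
      = measure_pmf.expectation p (\<lambda>x. (S x)\<^sup>2) - (measure_pmf.expectation p S)\<^sup>2"
    by (rule measure_pmf.variance_eq)
  also have "\<dots> = (\<Sum>k\<in>I. \<Sum>l\<in>I. ?P (M k \<inter> M l) - ?P (M k) * ?P (M l))"
    unfolding S_sq by (simp add: S_def power2_eq_square sum_product sum_subtractf)
  also have "\<dots> \<le> (\<Sum>k\<in>I. ?P (M k) * (1 - ?P (M k)))"
  proof (rule sum_mono)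
    fix k assume k: "k \<in> I"
    have "(\<Sum>l\<in>I - {k}. ?P (M k \<inter> M l) - ?P (M k) * ?P (M l)) \<le> 0"
      using neg_corr k by (intro sum_nonpos) auto
    with k assms(1) show "(\<Sum>l\<in>I. ?P (M k \<inter> M l) - ?P (M k) * ?P (M l)) \<le> ?P (M k) * (1 - ?P (M k))"
      by (simp add: sum.remove algebra_simps)
  qed
  finally show ?thesis unfolding S_def .
qed

lemma prob_card_notin_less_le:
  fixes p :: "'a pmf" and I :: "'b set" and M :: "'b \<Rightarrow> 'a set"
  defines "\<mu> \<equiv> (\<Sum>k\<in>I. 1 - measure_pmf.prob p (M k))"
  assumes "finite I"
    and neg_corr: "\<And>k l. k \<in> I \<Longrightarrow> l \<in> I \<Longrightarrow> k \<noteq> l \<Longrightarrow>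
           measure_pmf.prob p (M k \<inter> M l) \<le> measure_pmf.prob p (M k) * measure_pmf.prob p (M l)"
    and "a < \<mu>"
  shows "measure_pmf.prob p {x. real (card {k\<in>I. x \<notin> M k}) < a} \<le> \<mu> / (\<mu> - a)\<^sup>2"
proof -
  let ?P = "measure_pmf.prob p"
  define S where "S = (\<lambda>x. \<Sum>k\<in>I. indicator (M k) x :: real)"
  have card_eq: "real (card {k\<in>I. x \<notin> M k}) = real (card I) - S x" for x
  proof -
    have "card {k\<in>I. x \<notin> M k} + card {k\<in>I. x \<in> M k} = card I"
      using assms(2) by (subst card_Un_disjoint[symmetric]) (auto intro: arg_cong[where f = card])
    moreover have "S x = real (card {k\<in>I. x \<in> M k})"
      using assms(2) by (simp add: S_def indicator_def sum.If_cases Int_def)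
    ultimately show ?thesis by linarith
  qed
  have "measure_pmf.expectation p S = real (card I) - \<mu>"
    using assms(2) by (simp add: S_def \<mu>_def sum_subtractf)
  with card_eq have "{x. real (card {k\<in>I. x \<notin> M k}) < a}
      \<subseteq> {x \<in> space (measure_pmf p). \<mu> - a \<le> \<bar>S x - measure_pmf.expectation p S\<bar>}"
    by auto
  then have "?P {x. real (card {k\<in>I. x \<notin> M k}) < a}
      \<le> ?P {x \<in> space (measure_pmf p). \<mu> - a \<le> \<bar>S x - measure_pmf.expectation p S\<bar>}"
    by (intro measure_pmf.finite_measure_mono) auto
  also have "\<dots> \<le> measure_pmf.variance p S / (\<mu> - a)\<^sup>2"
  proof (rule measure_pmf.Chebyshev_inequality)
    have "0 \<le> S x \<and> S x \<le> real (card I)" for x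
      using sum_bounded_above[of I "\<lambda>k. indicator (M k) x :: real" 1]
      by (auto simp: S_def indicator_def intro: sum_nonneg)
    then have "\<bar>(S x)\<^sup>2\<bar> \<le> real (card I) ^ 2" for x
      by (simp add: power_mono)
    then show "integrable (measure_pmf p) (\<lambda>x. (S x)\<^sup>2)"
      by (intro measure_pmf.integrable_const_bound[where B = "real (card I) ^ 2"]) auto
  qed (use \<open>a < \<mu>\<close> in auto)
  also have "\<dots> \<le> \<mu> / (\<mu> - a)\<^sup>2"
  proof (intro divide_right_mono)
    have "measure_pmf.variance p S \<le> (\<Sum>k\<in>I. ?P (M k) * (1 - ?P (M k)))"
      unfolding S_def by (rule variance_sum_indicators_le[OF assms(2) neg_corr])
    also have "\<dots> \<le> \<mu>"
      unfolding \<mu>_def by (intro sum_mono) (simp add: mult_left_le_one_le)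
    finally show "measure_pmf.variance p S \<le> \<mu>" .
  qed simp
  finally show ?thesis .
qed

lemma card_mult_prob_le_by_invariance:
  fixes p :: "'a pmf" and g :: "'b \<Rightarrow> 'a \<Rightarrow> 'a"
  assumes "finite F" "\<And>a. a \<in> F \<Longrightarrow> map_pmf (g a) p = p"
    and "\<And>x. real (card {a \<in> F. g a x \<in> Q}) \<le> c * indicator R x"
  shows "real (card F) * measure_pmf.prob p Q \<le> c * measure_pmf.prob p R"
proof -
  have "real (card F) * measure_pmf.prob p Q = (\<Sum>a\<in>F. measure_pmf.prob (map_pmf (g a) p) Q)"
    using assms(2) by simp
  also have "\<dots> = measure_pmf.expectation p (\<lambda>x. \<Sum>a\<in>F. indicator {x. g a x \<in> Q} x)"
    by (simp add: vimage_def)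
  also have "\<dots> \<le> measure_pmf.expectation p (\<lambda>x. c * indicator R x)"
  proof (rule integral_mono)
    show "integrable (measure_pmf p) (\<lambda>x. \<Sum>a\<in>F. indicator {x. g a x \<in> Q} x :: real)"
      by (intro Bochner_Integration.integrable_sum) simp
    show "(\<Sum>a\<in>F. indicator {x. g a x \<in> Q} x) \<le> c * indicator R x" for x
      using assms(1) assms(3)[of x] by (simp add: indicator_def sum.If_cases Int_def)
  qed simp
  also have "\<dots> = c * measure_pmf.prob p R"
    by simp
  finally show ?thesis .
qed

lemma card_small_subsets_le:
  assumes "0 < L"
  shows "real (card {D \<in> Pow {..<L}. real (card D) \<le> 2 * real L / 5}) \<le> 2 ^ L * exp (- real L / 50)"
proof -
  have binomial: "binomial_pmf L (1 / 2) = map_pmf card (pmf_of_set (Pow {..<L}))"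
  proof -
    have "binomial_pmf L (1 / 2)
        = map_pmf (\<lambda>f. card {x \<in> {..<L}. f x}) (Pi_pmf {..<L} False (\<lambda>_. bernoulli_pmf (1 / 2)))"
      by (rule binomial_pmf_altdef') auto
    also have "\<dots> = map_pmf card (map_pmf (\<lambda>b. {x \<in> {..<L}. b x})
                                   (Pi_pmf {..<L} False (\<lambda>_. bernoulli_pmf (1 / 2))))"
      by (simp add: pmf.map_comp o_def)
    also have "\<dots> = map_pmf card (pmf_of_set (Pow {..<L}))"
      by (subst pmf_of_set_Pow_conv_bernoulli) auto
    finally show ?thesis .
  qed
  have "real (card {D \<in> Pow {..<L}. real (card D) \<le> 2 * real L / 5}) / 2 ^ L
      = measure_pmf.prob (pmf_of_set (Pow {..<L})) {D. real (card D) \<le> 2 * real L / 5}"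
    by (subst measure_pmf_of_set) (auto simp: card_Pow Int_def)
  also have "\<dots> = measure_pmf.prob (binomial_pmf L (1 / 2)) {k. real k \<le> real L * (1 / 2) - real L / 10}"
    unfolding binomial by (simp add: vimage_def field_simps)
  also have "\<dots> \<le> exp (- 2 * (real L / 10)\<^sup>2 / real L)"
    using assms by (intro binomial_distribution.prob_le) (auto simp: binomial_distribution_def)
  also have "\<dots> = exp (- real L / 50)"
    using assms by (simp add: power2_eq_square field_simps)
  finally show ?thesis
    by (simp add: field_simps)
qed

section \<open>Odd gaps and flips of pairs\<close>

definition adjacent_count :: "('a \<Rightarrow> 'a \<Rightarrow> bool) \<Rightarrow> 'a list \<Rightarrow> nat" where
  "adjacent_count R xs = length (filter (case_prod R) (zip xs (tl xs)))"

lemma adjacent_count_Nil [simp]: "adjacent_count R [] = 0"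
  and adjacent_count_single [simp]: "adjacent_count R [x] = 0"
  and adjacent_count_Cons_Cons [simp]:
    "adjacent_count R (x # y # zs) = (if R x y then 1 else 0) + adjacent_count R (y # zs)"
  by (simp_all add: adjacent_count_def)

lemma card_adjacent_eq_adjacent_count:
  "card {j. j + 1 < length xs \<and> R (xs ! j) (xs ! (j + 1))} = adjacent_count R xs"
  unfolding adjacent_count_def length_filter_conv_card
  by (intro arg_cong[where f = card]) (auto simp: nth_tl)

lemma adjacent_count_le_Cons: "adjacent_count R xs \<le> adjacent_count R (x # xs)"
  by (cases xs) auto

lemma adjacent_count_neq_Cons_le:
  "adjacent_count (\<noteq>) (a # xs) \<le> (if a \<noteq> b then 1 else 0) + adjacent_count (\<noteq>) (b # xs)"
  by (cases xs) auto

lemma adjacent_count_neq_map_filter_Cons_le: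
  "adjacent_count (\<noteq>) (a # map f (filter P xs)) \<le> adjacent_count (\<noteq>) (a # map f xs)"
proof (induction xs arbitrary: a)
  case (Cons x xs)
  show ?case
  proof (cases "P x")
    case False
    have "adjacent_count (\<noteq>) (a # map f (filter P xs)) \<le> adjacent_count (\<noteq>) (a # map f xs)"
      by (rule Cons.IH)
    also have "\<dots> \<le> (if a \<noteq> f x then 1 else 0) + adjacent_count (\<noteq>) (f x # map f xs)"
      by (rule adjacent_count_neq_Cons_le)
    finally show ?thesis using False by simp
  qed (use Cons.IH[of "f x"] in simp)
qed simp

lemma adjacent_count_neq_map_filter_le:
  "adjacent_count (\<noteq>) (map f (filter P xs)) \<le> adjacent_count (\<noteq>) (map f xs)"
proof (induction xs)
  case (Cons x xs)
  then show ?case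
    using adjacent_count_neq_map_filter_Cons_le[of "f x" f P xs]
      adjacent_count_le_Cons[of "(\<noteq>)" "map f xs" "f x"]
    by auto
qed simp

lemma adjacent_count_odd_diff_eq:
  assumes "sorted_wrt (<) (xs :: nat list)"
  shows "adjacent_count (\<lambda>x y. odd (y - x)) xs = adjacent_count (\<noteq>) (map odd xs)"
  using assms
proof (induction xs rule: induct_list012)
  case (3 x y zs)
  then have "odd (y - x) = (odd x \<noteq> odd y)" by auto
  with 3 show ?case by simp
qed simp_all

lemma card_Suc_mem_le_adjacent_count_odd_diff:
  assumes "sorted_wrt (<) (xs :: nat list)"
  shows "card {x \<in> set xs. Suc x \<in> set xs} \<le> adjacent_count (\<lambda>x y. odd (y - x)) xs"
  using assms
proof (induction xs rule: induct_list012)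
  case (3 x y zs)
  have "x < y" "\<forall>z\<in>set zs. x < z \<and> y < z"
    using "3.prems" by auto
  then have "{z \<in> set (x # y # zs). Suc z \<in> set (x # y # zs)}
      \<subseteq> (if Suc x = y then {x} else {}) \<union> {z \<in> set (y # zs). Suc z \<in> set (y # zs)}"
    by auto
  then have "card {z \<in> set (x # y # zs). Suc z \<in> set (x # y # zs)}
      \<le> card ((if Suc x = y then {x} else {}) \<union> {z \<in> set (y # zs). Suc z \<in> set (y # zs)})"
    by (intro card_mono) auto
  also have "\<dots> \<le> card (if Suc x = y then {x} else {}) + card {z \<in> set (y # zs). Suc z \<in> set (y # zs)}"
    by (rule card_Un_le)
  also have "\<dots> \<le> (if Suc x = y then 1 else 0) + adjacent_count (\<lambda>x y. odd (y - x)) (y # zs)"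
    using "3.IH"(2) "3.prems" by simp
  also have "\<dots> \<le> adjacent_count (\<lambda>x y. odd (y - x)) (x # y # zs)"
    by auto
  finally show ?case .
qed simp_all

lemma bool_list_eqI_changes:
  fixes bs cs :: "bool list"
  assumes "length bs = length cs" "bs ! 0 = cs ! 0"
    and "\<And>j. j + 1 < length bs \<Longrightarrow> (bs ! j \<noteq> bs ! (j + 1)) = (cs ! j \<noteq> cs ! (j + 1))"
  shows "bs = cs"
proof (rule nth_equalityI[OF assms(1)])
  show "i < length bs \<Longrightarrow> bs ! i = cs ! i" for i
  proof (induction i)
    case (Suc i)
    then show ?case using assms(3)[of i] by auto
  qed (use assms(2) in simp)
qed

lemma card_bool_lists_few_changes_le:
  "card {bs :: bool list. length bs = Suc L \<and> real (adjacent_count (\<noteq>) bs) \<le> r}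
     \<le> 2 * card {D \<in> Pow {..<L}. real (card D) \<le> r}"
proof -
  define changes where "changes bs = {j. j + 1 < length bs \<and> bs ! j \<noteq> bs ! (j + 1)}" for bs :: "bool list"
  define code where "code bs = (changes bs, bs ! 0)" for bs :: "bool list"
  have inj: "inj_on code {bs. length bs = Suc L}"
  proof (rule inj_onI)
    fix bs cs assume "bs \<in> {bs. length bs = Suc L}" "cs \<in> {bs. length bs = Suc L}"
      and eq: "code bs = code cs"
    then have len: "length bs = length cs" by simp
    have step: "(bs ! j \<noteq> bs ! (j + 1)) = (cs ! j \<noteq> cs ! (j + 1))" if "j + 1 < length bs" for j
    proof -
      have "j \<in> changes bs \<longleftrightarrow> j \<in> changes cs" using eq by (simp add: code_def)
      with that len show ?thesis by (simp add: changes_def)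
    qed
    moreover have "bs ! 0 = cs ! 0" using eq by (simp add: code_def)
    ultimately show "bs = cs"
      using len by (intro bool_list_eqI_changes)
  qed
  have code_mem: "code bs \<in> {D \<in> Pow {..<L}. real (card D) \<le> r} \<times> UNIV"
    if "length bs = Suc L" "real (adjacent_count (\<noteq>) bs) \<le> r" for bs
  proof -
    have "changes bs \<subseteq> {..<L}" using that(1) by (auto simp: changes_def)
    moreover have "card (changes bs) = adjacent_count (\<noteq>) bs"
      unfolding changes_def by (rule card_adjacent_eq_adjacent_count)
    ultimately show ?thesis using that(2) by (simp add: code_def)
  qed
  have "card {bs :: bool list. length bs = Suc L \<and> real (adjacent_count (\<noteq>) bs) \<le> r}
      \<le> card ({D \<in> Pow {..<L}. real (card D) \<le> r} \<times> (UNIV :: bool set))"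
  proof (rule card_inj_on_le)
    show "inj_on code {bs. length bs = Suc L \<and> real (adjacent_count (\<noteq>) bs) \<le> r}"
      using inj by (rule inj_on_subset) blast
    show "code ` {bs. length bs = Suc L \<and> real (adjacent_count (\<noteq>) bs) \<le> r}
        \<subseteq> {D \<in> Pow {..<L}. real (card D) \<le> r} \<times> UNIV"
      using code_mem by blast
  qed simp
  then show ?thesis
    by (simp add: card_cartesian_product)
qed

lemma sorted_list_of_set_subset_eq_filter:
  fixes s t :: "'a::linorder set"
  assumes "finite t" "s \<subseteq> t"
  shows "sorted_list_of_set s = filter (\<lambda>x. x \<in> s) (sorted_list_of_set t)"
proof (rule strict_sorted_equal)
  show "set (sorted_list_of_set s) = set (filter (\<lambda>x. x \<in> s) (sorted_list_of_set t))"
    using assms finite_subset[OF assms(2,1)] by auto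
qed (simp_all add: sorted_wrt_filter)

lemma sorted_list_of_set_image_strict_mono_on:
  fixes f :: "'a::linorder \<Rightarrow> 'b::linorder"
  assumes "finite s" "strict_mono_on s f"
  shows "sorted_list_of_set (f ` s) = map f (sorted_list_of_set s)"
proof (rule strict_sorted_equal)
  have "sorted_wrt (\<lambda>x y. f x < f y) (sorted_list_of_set s)"
  proof (rule sorted_wrt_mono_rel[of _ "(<)"])
    fix x y assume "x \<in> set (sorted_list_of_set s)" "y \<in> set (sorted_list_of_set s)" "x < y"
    with assms show "f x < f y" by (auto simp: strict_mono_on_def)
  qed simp
  then show "sorted_wrt (<) (map f (sorted_list_of_set s))"
    by (simp add: sorted_wrt_map)
  show "sorted_wrt (<) (sorted_list_of_set (f ` s))"
    by simp
  show "set (sorted_list_of_set (f ` s)) = set (map f (sorted_list_of_set s))"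
    using assms(1) by simp
qed

lemma card_Pow_restrict:
  assumes "finite M" "U \<subseteq> M"
  shows "card {A \<in> Pow M. Q (A \<inter> U)} = card {B \<in> Pow U. Q B} * 2 ^ card (M - U)"
proof -
  have "bij_betw (\<lambda>(B, C). B \<union> C) ({B \<in> Pow U. Q B} \<times> Pow (M - U)) {A \<in> Pow M. Q (A \<inter> U)}"
  proof (rule bij_betw_byWitness[where f' = "\<lambda>A. (A \<inter> U, A - U)"])
    have "B \<subseteq> U \<Longrightarrow> C \<subseteq> M - U \<Longrightarrow> (B \<union> C) \<inter> U = B" for B C by auto
    with assms(2) show "(\<lambda>(B, C). B \<union> C) ` ({B \<in> Pow U. Q B} \<times> Pow (M - U)) \<subseteq> {A \<in> Pow M. Q (A \<inter> U)}"
      by auto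
  qed auto
  then have "card {A \<in> Pow M. Q (A \<inter> U)} = card ({B \<in> Pow U. Q B} \<times> Pow (M - U))"
    by (simp add: bij_betw_same_card)
  with assms show ?thesis
    by (simp add: card_cartesian_product card_Pow)
qed

definition odd_gaps :: "nat set \<Rightarrow> nat" where
  "odd_gaps t = adjacent_count (\<lambda>x y. odd (y - x)) (sorted_list_of_set t)"

lemma oddgaps_eq_odd_gaps: "oddgaps \<theta> X = odd_gaps (valset \<theta> X)"
  unfolding oddgaps_def odd_gaps_def Let_def by (rule card_adjacent_eq_adjacent_count)

lemma odd_gaps_eq_parity_changes:
  "odd_gaps t = adjacent_count (\<noteq>) (map odd (sorted_list_of_set t))"
  unfolding odd_gaps_def by (rule adjacent_count_odd_diff_eq) simp

lemma odd_gaps_mono: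
  assumes "finite t" "s \<subseteq> t"
  shows "odd_gaps s \<le> odd_gaps t"
  using adjacent_count_neq_map_filter_le[of odd "\<lambda>x. x \<in> s" "sorted_list_of_set t"]
  by (simp add: odd_gaps_eq_parity_changes sorted_list_of_set_subset_eq_filter[OF assms])

lemma card_Suc_mem_le_odd_gaps:
  assumes "finite t"
  shows "card {x \<in> t. Suc x \<in> t} \<le> odd_gaps t"
  using card_Suc_mem_le_adjacent_count_odd_diff[of "sorted_list_of_set t"] assms
  by (simp add: odd_gaps_def)

text \<open>The values 2j-1 and 2j form the pair with index j; partner swaps them (and fixes the
  junk value 0, since 0 - 1 = 0 in nat).\<close>

definition pair_index :: "nat \<Rightarrow> nat" where
  "pair_index v = (v + 1) div 2"

definition partner :: "nat \<Rightarrow> nat" where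
  "partner v = (if odd v then v + 1 else v - 1)"

definition flip_pairs :: "nat set \<Rightarrow> nat \<Rightarrow> nat" where
  "flip_pairs A v = (if pair_index v \<in> A then partner v else v)"

definition paired :: "nat set \<Rightarrow> nat set" where
  "paired t = {x \<in> t. partner x \<in> t}"

definition unpaired :: "nat set \<Rightarrow> nat set" where
  "unpaired t = {x \<in> t. partner x \<notin> t}"

lemma partner_partner [simp]: "partner (partner v) = v"
  by (simp add: partner_def)

lemma pair_index_partner [simp]: "pair_index (partner v) = pair_index v"
  by (simp add: partner_def pair_index_def) presburger

lemma pair_index_cases:
  assumes "v \<noteq> 0"
  obtains "v = 2 * pair_index v - 1" "partner v = 2 * pair_index v"
        | "v = 2 * pair_index v" "partner v = 2 * pair_index v - 1"
proof (cases "odd v")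
  case True
  then obtain k where "v = 2 * k + 1" by (auto elim: oddE)
  then show ?thesis using that(1) by (simp add: pair_index_def partner_def)
next
  case False
  then obtain k where "v = 2 * k" by auto
  then show ?thesis using that(2) assms by (simp add: pair_index_def partner_def)
qed

lemma pair_index_eq_iff:
  assumes "v \<noteq> 0" "w \<noteq> 0"
  shows "pair_index v = pair_index w \<longleftrightarrow> w = v \<or> w = partner v"
proof
  assume "pair_index v = pair_index w"
  then show "w = v \<or> w = partner v"
    using pair_index_cases[OF assms(1)] pair_index_cases[OF assms(2)] by metis
qed auto

lemma mem_atLeastAtMost_iff_pair_index: "v \<in> {1..2 * m} \<longleftrightarrow> pair_index v \<in> {1..m}"
  by (simp add: pair_index_def) presburger

lemma flip_pairs_flip_pairs [simp]: "flip_pairs A (flip_pairs A v) = v"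
  by (simp add: flip_pairs_def)

lemma inj_flip_pairs: "inj (flip_pairs A)"
  by (metis flip_pairs_flip_pairs injI)

lemma flip_pairs_eq_iff [simp]: "flip_pairs A v = flip_pairs A w \<longleftrightarrow> v = w"
  by (rule inj_eq[OF inj_flip_pairs])

lemma pair_index_flip_pairs [simp]: "pair_index (flip_pairs A v) = pair_index v"
  by (simp add: flip_pairs_def)

lemma flip_pairs_eq_0_iff [simp]: "flip_pairs A v = 0 \<longleftrightarrow> v = 0"
  by (metis flip_pairs_def flip_pairs_flip_pairs partner_def diff_0_eq_0 even_zero)

lemma flip_pairs_0 [simp]: "flip_pairs A 0 = 0"
  by (simp add: flip_pairs_def partner_def)

lemma zero_in_flip_pairs_image_iff [simp]: "0 \<in> flip_pairs A ` s \<longleftrightarrow> 0 \<in> s"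
  using inj_image_mem_iff[OF inj_flip_pairs, of A 0 s] by (simp only: flip_pairs_0)

lemma partner_flip_pairs: "partner (flip_pairs A v) = flip_pairs A (partner v)"
  by (simp add: flip_pairs_def)

lemma odd_flip_pairs: "v \<noteq> 0 \<Longrightarrow> odd (flip_pairs A v) \<longleftrightarrow> odd v \<noteq> (pair_index v \<in> A)"
  by (simp add: flip_pairs_def partner_def)

lemma flip_pairs_bounds:
  assumes "v \<noteq> 0"
  shows "2 * pair_index v - 1 \<le> flip_pairs A v \<and> flip_pairs A v \<le> 2 * pair_index v"
  using assms by (cases rule: pair_index_cases) (auto simp: flip_pairs_def)

lemma flip_pairs_less:
  assumes "v \<noteq> 0" "w \<noteq> 0" "pair_index v < pair_index w"
  shows "flip_pairs A v < flip_pairs A w"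
  using assms flip_pairs_bounds[OF assms(1), of A] flip_pairs_bounds[OF assms(2), of A] by linarith

lemma flip_pairs_image_subset_atLeastAtMost_iff:
  "flip_pairs A ` s \<subseteq> {1..2 * m} \<longleftrightarrow> s \<subseteq> {1..2 * m}"
proof -
  have "flip_pairs A v \<in> {1..2 * m} \<longleftrightarrow> v \<in> {1..2 * m}" for v
    by (simp only: mem_atLeastAtMost_iff_pair_index pair_index_flip_pairs)
  then show ?thesis by blast
qed

lemma paired_flip_pairs_image: "paired (flip_pairs A ` t) = flip_pairs A ` paired t"
  by (auto simp: paired_def partner_flip_pairs inj_image_mem_iff[OF inj_flip_pairs])

lemma unpaired_flip_pairs_image: "unpaired (flip_pairs A ` t) = flip_pairs A ` unpaired t"
  by (auto simp: unpaired_def partner_flip_pairs inj_image_mem_iff[OF inj_flip_pairs])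

lemma card_paired_add_card_unpaired:
  assumes "finite t"
  shows "card (paired t) + card (unpaired t) = card t"
proof -
  have "t = paired t \<union> unpaired t" "paired t \<inter> unpaired t = {}"
    by (auto simp: paired_def unpaired_def)
  with assms show ?thesis
    by (metis card_Un_disjoint finite_Un)
qed

lemma card_paired_le_odd_gaps:
  assumes "finite t" "0 \<notin> t"
  shows "card (paired t) \<le> 2 * odd_gaps t"
proof -
  define odds where "odds = {x \<in> paired t. odd x}"
  have "paired t \<subseteq> odds \<union> Suc ` odds"
  proof
    fix x assume x: "x \<in> paired t"
    show "x \<in> odds \<union> Suc ` odds"
    proof (cases "odd x")
      case False
      moreover have "x \<noteq> 0"
        using x assms(2) unfolding paired_def by (metis (no_types, lifting) mem_Collect_eq)
      ultimately have "partner x \<in> odds" "x = Suc (partner x)"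
        using x by (auto simp: odds_def paired_def partner_def)
      then show ?thesis by blast
    qed (use x odds_def in auto)
  qed
  moreover have "finite odds" using assms(1) by (simp add: odds_def paired_def)
  ultimately have "card (paired t) \<le> card (odds \<union> Suc ` odds)"
    by (intro card_mono) auto
  also have "\<dots> \<le> card odds + card (Suc ` odds)"
    by (rule card_Un_le)
  also have "\<dots> \<le> 2 * card odds"
    using card_image_le[OF \<open>finite odds\<close>, of Suc] by simp
  also have "card odds \<le> card {x \<in> t. Suc x \<in> t}"
    using assms(1) by (intro card_mono) (auto simp: odds_def paired_def partner_def)
  also have "\<dots> \<le> odd_gaps t"
    by (rule card_Suc_mem_le_odd_gaps[OF assms(1)])
  finally show ?thesis by simp
qed

lemma card_paired_le_odd_gaps_flip_pairs:
  assumes "finite s" "0 \<notin> s"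
  shows "card (paired s) \<le> 2 * odd_gaps (flip_pairs A ` s)"
proof -
  have "card (paired s) = card (paired (flip_pairs A ` s))"
    unfolding paired_flip_pairs_image by (rule card_image[symmetric]) (simp add: inj_on_def)
  also have "\<dots> \<le> 2 * odd_gaps (flip_pairs A ` s)"
    using assms by (intro card_paired_le_odd_gaps) auto
  finally show ?thesis .
qed

lemma inj_on_pair_index_unpaired:
  assumes "0 \<notin> t"
  shows "inj_on pair_index (unpaired t)"
proof (rule inj_onI)
  fix v w assume vw: "v \<in> unpaired t" "w \<in> unpaired t" "pair_index v = pair_index w"
  moreover have "v \<noteq> 0" "w \<noteq> 0"
    using vw(1,2) assms unfolding unpaired_def by (metis (no_types, lifting) mem_Collect_eq)+
  ultimately show "v = w" by (auto simp: unpaired_def pair_index_eq_iff)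
qed

lemma strict_mono_on_flip_pairs_unpaired:
  assumes "0 \<notin> t"
  shows "strict_mono_on (unpaired t) (flip_pairs A)"
proof (rule strict_mono_onI)
  fix v w assume vw: "v \<in> unpaired t" "w \<in> unpaired t" "v < w"
  then have "pair_index v \<le> pair_index w"
    by (simp add: pair_index_def div_le_mono)
  moreover have "pair_index v \<noteq> pair_index w"
    using inj_on_pair_index_unpaired[OF assms] vw by (auto dest: inj_onD)
  moreover have "v \<noteq> 0" "w \<noteq> 0"
    using vw(1,2) assms unfolding unpaired_def by (metis (no_types, lifting) mem_Collect_eq)+
  ultimately show "flip_pairs A v < flip_pairs A w"
    by (intro flip_pairs_less) auto
qed

lemma inj_on_flip_pairs_parities:
  assumes "0 \<notin> set ws"
  shows "inj_on (\<lambda>A. map (\<lambda>x. odd (flip_pairs A x)) ws) (Pow (pair_index ` set ws))"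
proof (rule inj_onI)
  fix A B assume A: "A \<in> Pow (pair_index ` set ws)" and B: "B \<in> Pow (pair_index ` set ws)"
    and eq: "map (\<lambda>x. odd (flip_pairs A x)) ws = map (\<lambda>x. odd (flip_pairs B x)) ws"
  have "pair_index x \<in> A \<longleftrightarrow> pair_index x \<in> B" if "x \<in> set ws" for x
  proof -
    have "odd (flip_pairs A x) = odd (flip_pairs B x)" using eq that by simp
    moreover have "x \<noteq> 0" using that assms by metis
    ultimately show ?thesis by (simp add: odd_flip_pairs) blast
  qed
  with A B show "A = B" by blast
qed

lemma card_flips_few_parity_changes_le:
  assumes "0 \<notin> set ws" "distinct (map pair_index ws)" "length ws = Suc L" "0 < L"
    and "finite M" "pair_index ` set ws \<subseteq> M"
  shows "real (card {A \<in> Pow M. real (adjacent_count (\<noteq>) (map (\<lambda>x. odd (flip_pairs A x)) ws))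
                                   \<le> 2 * real L / 5})
           \<le> exp (- real L / 50) * 2 ^ card M"
proof -
  define U where "U = pair_index ` set ws"
  define parities where "parities A = map (\<lambda>x. odd (flip_pairs A x)) ws" for A
  define few where "few bs \<longleftrightarrow> real (adjacent_count (\<noteq>) bs) \<le> 2 * real L / 5" for bs :: "bool list"
  define small where "small = {D \<in> Pow {..<L}. real (card D) \<le> 2 * real L / 5}"
  have U: "U \<subseteq> M" "card U = Suc L"
    using assms(2,3,6) distinct_card[OF assms(2)] by (simp_all add: U_def)
  have parities_Int: "parities (A \<inter> U) = parities A" for A
    by (auto simp: parities_def U_def flip_pairs_def)
  have "card {B \<in> Pow U. few (parities B)} \<le> card {bs. length bs = Suc L \<and> few bs}"
  proof (rule card_inj_on_le)
    show "inj_on parities {B \<in> Pow U. few (parities B)}"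
      using inj_on_flip_pairs_parities[OF assms(1)]
      unfolding parities_def U_def by (rule inj_on_subset) blast
    show "parities ` {B \<in> Pow U. few (parities B)} \<subseteq> {bs. length bs = Suc L \<and> few bs}"
      using assms(3) by (auto simp: parities_def)
    show "finite {bs :: bool list. length bs = Suc L \<and> few bs}"
      using finite_lists_length_eq[of "UNIV :: bool set" "Suc L"] by (rule finite_subset[rotated]) auto
  qed
  also have "\<dots> \<le> 2 * card small"
    unfolding few_def small_def by (rule card_bool_lists_few_changes_le)
  finally have few_U: "real (card {B \<in> Pow U. few (parities B)}) \<le> 2 * real (card small)"
    using of_nat_mono by fastforce
  have "real (card {A \<in> Pow M. few (parities A)})
      = real (card {B \<in> Pow U. few (parities B)}) * 2 ^ card (M - U)"
    using card_Pow_restrict[OF assms(5) U(1), of "\<lambda>B. few (parities B)"] by (simp add: parities_Int)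
  also have "\<dots> \<le> 2 * (2 ^ L * exp (- real L / 50)) * 2 ^ card (M - U)"
    using few_U card_small_subsets_le[OF assms(4)] unfolding small_def by (intro mult_right_mono) auto
  also have "\<dots> = exp (- real L / 50) * 2 ^ (card U + card (M - U))"
    using U(2) by (simp add: power_add)
  also have "card U + card (M - U) = card M"
    using U(1) assms(5) by (metis card_Diff_subset card_mono finite_subset le_add_diff_inverse)
  finally show ?thesis
    by (simp add: parities_def few_def)
qed

lemma parity_changes_unpaired_le_odd_gaps:
  assumes "finite s" "0 \<notin> s"
  shows "adjacent_count (\<noteq>) (map (\<lambda>x. odd (flip_pairs A x)) (sorted_list_of_set (unpaired s)))
           \<le> odd_gaps (flip_pairs A ` s)"
proof -
  have "sorted_list_of_set (flip_pairs A ` unpaired s) = map (flip_pairs A) (sorted_list_of_set (unpaired s))"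
    using assms by (intro sorted_list_of_set_image_strict_mono_on strict_mono_on_flip_pairs_unpaired)
      (auto simp: unpaired_def)
  then have "adjacent_count (\<noteq>) (map (\<lambda>x. odd (flip_pairs A x)) (sorted_list_of_set (unpaired s)))
      = odd_gaps (unpaired (flip_pairs A ` s))"
    by (simp add: odd_gaps_eq_parity_changes unpaired_flip_pairs_image comp_def)
  also have "\<dots> \<le> odd_gaps (flip_pairs A ` s)"
    using assms(1) by (intro odd_gaps_mono) (auto simp: unpaired_def)
  finally show ?thesis .
qed

lemma card_flips_few_odd_gaps_le:
  assumes "finite s" "0 \<notin> s" "card s = n" "10 \<le> n"
    and "finite M" "pair_index ` s \<subseteq> M"
  shows "real (card {A \<in> Pow M. real (odd_gaps (flip_pairs A ` s)) \<le> real n / 5})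
           \<le> exp (- real n / 100) * 2 ^ card M"
proof (cases "2 * n < 5 * card (paired s)")
  case True
  have "real n / 5 < real (odd_gaps (flip_pairs A ` s))" for A
  proof -
    have "n < 5 * odd_gaps (flip_pairs A ` s)"
      using True card_paired_le_odd_gaps_flip_pairs[OF assms(1,2), of A] by linarith
    then show ?thesis by simp
  qed
  then have none: "{A \<in> Pow M. real (odd_gaps (flip_pairs A ` s)) \<le> real n / 5} = {}"
    by (auto simp: not_le[symmetric])
  show ?thesis unfolding none by simp
next
  case False
  define ws where "ws = sorted_list_of_set (unpaired s)"
  define L where "L = length ws - 1"
  define changes where "changes A = adjacent_count (\<noteq>) (map (\<lambda>x. odd (flip_pairs A x)) ws)" for A
  have "n = card (paired s) + length ws"
    using card_paired_add_card_unpaired[OF assms(1)] assms(3) by (simp add: ws_def)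
  with False assms(4) have L: "length ws = Suc L" "n \<le> 2 * L" "0 < L"
    unfolding L_def by linarith+
  have "{A \<in> Pow M. real (odd_gaps (flip_pairs A ` s)) \<le> real n / 5}
      \<subseteq> {A \<in> Pow M. real (changes A) \<le> 2 * real L / 5}"
  proof safe
    fix A assume "real (odd_gaps (flip_pairs A ` s)) \<le> real n / 5"
    moreover have "real (changes A) \<le> real (odd_gaps (flip_pairs A ` s))"
      using parity_changes_unpaired_le_odd_gaps[OF assms(1,2)] by (simp add: changes_def ws_def)
    moreover have "real n / 5 \<le> 2 * real L / 5" using L(2) by simp
    ultimately show "real (changes A) \<le> 2 * real L / 5" by linarith
  qed
  then have "real (card {A \<in> Pow M. real (odd_gaps (flip_pairs A ` s)) \<le> real n / 5})
      \<le> real (card {A \<in> Pow M. real (changes A) \<le> 2 * real L / 5})"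
    using assms(5) by (simp add: card_mono)
  also have "\<dots> \<le> exp (- real L / 50) * 2 ^ card M"
    unfolding changes_def
  proof (rule card_flips_few_parity_changes_le)
    show "distinct (map pair_index ws)"
      using assms(1,2) inj_on_pair_index_unpaired[OF assms(2)] by (simp add: ws_def distinct_map unpaired_def)
    show "0 \<notin> set ws" "pair_index ` set ws \<subseteq> M"
      using assms(1,2,6) by (auto simp: ws_def unpaired_def)
  qed (use L assms(5) in auto)
  also have "\<dots> \<le> exp (- real n / 100) * 2 ^ card M"
    using L(2) by (intro mult_right_mono) auto
  finally show ?thesis .
qed

lemma valset_flip_pairs: "valset \<theta> (flip_pairs A \<circ> X) = flip_pairs A ` valset \<theta> X"
  by (simp add: valset_def image_comp)

lemma Nval_flip_pairs: "Nval \<theta> (flip_pairs A \<circ> X) = Nval \<theta> X"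
  unfolding Nval_def valset_flip_pairs by (rule card_image) (rule inj_on_subset[OF inj_flip_pairs], simp)

lemma pj_flip_pairs: "pj \<gamma> (flip_pairs A k) = pj \<gamma> k"
  using pair_index_flip_pairs[of A k] flip_pairs_eq_0_iff[of A k]
  by (simp add: pj_def pair_index_def)

context
  fixes \<gamma> :: real
  assumes gt1: "1 < \<gamma>"
begin

lemma suminf_Suc_powr_neg_ge_1: "(\<Sum>j. real (Suc j) powr (- \<gamma>)) \<ge> 1"
  using sum_le_suminf[OF summable_Suc_powr_neg[OF gt1], of "{..<1}"] by simp

lemma Czeta_mult_suminf: "Czeta \<gamma> * (\<Sum>j. real (Suc j) powr (- \<gamma>)) = 1"
  using suminf_Suc_powr_neg_ge_1 by (simp add: Czeta_def)

lemma Czeta_pos: "0 < Czeta \<gamma>"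
  using suminf_Suc_powr_neg_ge_1 by (simp add: Czeta_def)

lemma Czeta_le_1: "Czeta \<gamma> \<le> 1"
  using suminf_Suc_powr_neg_ge_1 by (simp add: Czeta_def inverse_le_1_iff)

lemma pj_nonneg: "0 \<le> pj \<gamma> k"
  using Czeta_pos by (simp add: pj_def)

lemma pj_le_half: "pj \<gamma> k \<le> 1 / 2"
proof (cases "k = 0")
  case False
  then have "real ((k + 1) div 2) powr (- \<gamma>) \<le> 1"
    using gt1 by (simp add: powr_minus_divide ge_one_powr_ge_zero)
  with Czeta_pos Czeta_le_1 show ?thesis
    by (simp add: pj_def mult_le_one)
qed (simp add: pj_def)

lemma pj_sums: "pj \<gamma> sums 1"
proof -
  define s where "s = Czeta \<gamma> / 2 * (\<Sum>j. real (Suc j) powr (- \<gamma>))"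
  define g where "g = (\<lambda>j. Czeta \<gamma> / 2 * real (Suc j) powr (- \<gamma>))"
  define f where "f = (\<lambda>j. if j = 0 then 0 else Czeta \<gamma> / 2 * real j powr (- \<gamma>))"
  have g_sums: "g sums s"
    unfolding g_def s_def by (intro sums_mult summable_sums summable_Suc_powr_neg gt1)
  then have f_sums: "f sums s"
    using sums_Suc_iff[of f s] by (simp add: f_def g_def)
  have "(\<lambda>n. if even n then f (n div 2) else g ((n - 1) div 2)) = pj \<gamma>"
  proof
    fix n :: nat
    show "(if even n then f (n div 2) else g ((n - 1) div 2)) = pj \<gamma> n"
    proof (cases "even n")
      case True
      then have "(n + 1) div 2 = n div 2" by presburger
      with True show ?thesis by (auto simp: f_def pj_def)
    next
      case False
      then have "(n + 1) div 2 = Suc ((n - 1) div 2)" by presburger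
      with False show ?thesis by (auto simp: g_def pj_def)
    qed
  qed
  moreover have "s + s = 1"
    using Czeta_mult_suminf by (simp add: s_def)
  ultimately show ?thesis
    using sums_if[OF g_sums f_sums] by simp
qed

lemma pmf_zdist: "pmf (zdist \<gamma>) k = pj \<gamma> k"
  unfolding zdist_def
proof (rule pmf_embed_pmf)
  have "(\<Sum>i. ennreal (pj \<gamma> i)) = ennreal (\<Sum>i. pj \<gamma> i)"
    by (rule suminf_ennreal2[OF pj_nonneg sums_summable[OF pj_sums]])
  then show "(\<integral>\<^sup>+ x. ennreal (pj \<gamma> x) \<partial>count_space UNIV) = 1"
    using pj_sums by (simp add: nn_integral_count_space_nat sums_iff)
qed (rule pj_nonneg)

lemma prob_zdist: "measure_pmf.prob (zdist \<gamma>) B = (\<Sum>k\<in>B. pj \<gamma> k)" if "finite B"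
  using that by (simp add: measure_measure_pmf_finite pmf_zdist)

lemma prob_zdist_atMost_even:
  "measure_pmf.prob (zdist \<gamma>) {..2 * m} = Czeta \<gamma> * (\<Sum>j<m. real (Suc j) powr (- \<gamma>))"
proof (induction m)
  case 0
  show ?case by (simp add: prob_zdist pj_def)
next
  case (Suc m)
  have "{..2 * Suc m} = {2 * m + 1, 2 * m + 2} \<union> {..2 * m}" by auto
  then have "measure_pmf.prob (zdist \<gamma>) {..2 * Suc m}
      = pj \<gamma> (2 * m + 1) + pj \<gamma> (2 * m + 2) + measure_pmf.prob (zdist \<gamma>) {..2 * m}"
    by (simp add: prob_zdist)
  with Suc.IH show ?case
    by (simp add: pj_def algebra_simps)
qed

lemma prob_zdist_greater_le:
  assumes "2 \<le> n"
  shows "measure_pmf.prob (zdist \<gamma>) {k. n < k} \<le> Czeta \<gamma> / (\<gamma> - 1) * real (n div 2) powr (1 - \<gamma>)"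
proof -
  define m where "m = n div 2"
  have "measure_pmf.prob (zdist \<gamma>) {k. n < k} \<le> measure_pmf.prob (zdist \<gamma>) (- {..2 * m})"
    by (rule measure_pmf.finite_measure_mono) (auto simp: m_def)
  also have "\<dots> = 1 - Czeta \<gamma> * (\<Sum>j<m. real (Suc j) powr (- \<gamma>))"
    using measure_pmf.prob_compl[of "{..2 * m}" "zdist \<gamma>"]
    by (simp add: Compl_eq_Diff_UNIV prob_zdist_atMost_even)
  also have "\<dots> = Czeta \<gamma> * (\<Sum>j. real (Suc (j + m)) powr (- \<gamma>))"
    using suminf_split_initial_segment[OF summable_Suc_powr_neg[OF gt1], of m] Czeta_mult_suminf
    by (simp add: algebra_simps)
  also have "\<dots> \<le> Czeta \<gamma> * (real m powr (1 - \<gamma>) / (\<gamma> - 1))"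
    using suminf_Suc_powr_neg_tail_le[OF gt1, of m] assms Czeta_pos
    by (intro mult_left_mono) (auto simp: m_def)
  finally show ?thesis by (simp add: m_def)
qed

lemma prob_zdist_outside_le:
  assumes "1 \<le> m"
  shows "measure_pmf.prob (zdist \<gamma>) (- {1..2 * m}) \<le> Czeta \<gamma> / (\<gamma> - 1) * real m powr (1 - \<gamma>)"
proof -
  have "- {1..2 * m} = {0} \<union> {k. 2 * m < k}" by auto
  then have "measure_pmf.prob (zdist \<gamma>) (- {1..2 * m})
      \<le> measure_pmf.prob (zdist \<gamma>) {0} + measure_pmf.prob (zdist \<gamma>) {k. 2 * m < k}"
    using measure_Un_le[of "{0}" "measure_pmf (zdist \<gamma>)" "{k. 2 * m < k}"] by simp
  also have "measure_pmf.prob (zdist \<gamma>) {0} = 0"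
    by (simp add: prob_zdist pj_def)
  also have "measure_pmf.prob (zdist \<gamma>) {k. 2 * m < k} \<le> Czeta \<gamma> / (\<gamma> - 1) * real m powr (1 - \<gamma>)"
    using prob_zdist_greater_le[of "2 * m"] assms by simp
  finally show ?thesis by simp
qed

lemma map_pmf_flip_pairs_zdist: "map_pmf (flip_pairs A) (zdist \<gamma>) = zdist \<gamma>"
proof (rule pmf_eqI)
  fix k
  have "pmf (map_pmf (flip_pairs A) (zdist \<gamma>)) (flip_pairs A (flip_pairs A k)) = pmf (zdist \<gamma>) (flip_pairs A k)"
    by (rule pmf_map_inj'[OF inj_flip_pairs])
  then show "pmf (map_pmf (flip_pairs A) (zdist \<gamma>)) k = pmf (zdist \<gamma>) k"
    by (simp add: pmf_zdist pj_flip_pairs)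
qed

lemma map_pmf_flip_pairs_sample: "map_pmf (\<lambda>X. flip_pairs A \<circ> X) (sample \<gamma> \<theta>) = sample \<gamma> \<theta>"
proof -
  have "Pi_pmf {..<\<theta>} 0 (\<lambda>_. map_pmf (flip_pairs A) (zdist \<gamma>))
      = map_pmf (\<lambda>X. flip_pairs A \<circ> X) (Pi_pmf {..<\<theta>} 0 (\<lambda>_. zdist \<gamma>))"
    by (rule Pi_pmf_map) auto
  then show ?thesis
    by (simp add: sample_def map_pmf_flip_pairs_zdist)
qed

lemma prob_sample_misses:
  "measure_pmf.prob (sample \<gamma> \<theta>) {X. \<forall>i<\<theta>. X i \<notin> B} = (1 - measure_pmf.prob (zdist \<gamma>) B) ^ \<theta>"
  using prob_Pi_pmf_all_notin[of "{..<\<theta>}" 0 "zdist \<gamma>" B] measure_pmf.prob_compl[of B "zdist \<gamma>"]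
  by (simp add: sample_def lessThan_def Compl_eq_Diff_UNIV)

lemma prob_sample_some_greater_le:
  assumes "2 \<le> n"
  shows "measure_pmf.prob (sample \<gamma> \<theta>) {X. \<exists>i<\<theta>. n < X i}
           \<le> Czeta \<gamma> / (\<gamma> - 1) * real \<theta> * real (n div 2) powr (1 - \<gamma>)"
proof -
  have "measure_pmf.prob (sample \<gamma> \<theta>) {X. \<exists>i<\<theta>. n < X i}
      \<le> real \<theta> * measure_pmf.prob (zdist \<gamma>) {k. n < k}"
    using prob_Pi_pmf_ex_le[of "{..<\<theta>}" 0 "zdist \<gamma>" "{k. n < k}"]
    by (simp add: sample_def lessThan_def)
  also have "\<dots> \<le> real \<theta> * (Czeta \<gamma> / (\<gamma> - 1) * real (n div 2) powr (1 - \<gamma>))"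
    by (intro mult_left_mono prob_zdist_greater_le assms) simp
  finally show ?thesis by (simp add: mult_ac)
qed

lemma prob_Max_valset_le:
  assumes "1 \<le> \<theta>" "2 \<le> n"
  shows "measure_pmf.prob (sample \<gamma> \<theta>) {X. Max (valset \<theta> X) \<le> n}
           \<ge> 1 - Czeta \<gamma> / (\<gamma> - 1) * real \<theta> * real (n div 2) powr (1 - \<gamma>)"
proof -
  let ?P = "measure_pmf.prob (sample \<gamma> \<theta>)"
  have "- {X. \<exists>i<\<theta>. n < X i} \<subseteq> {X. Max (valset \<theta> X) \<le> n}"
  proof
    fix X assume "X \<in> - {X. \<exists>i<\<theta>. n < X i}"
    moreover have "valset \<theta> X \<noteq> {}" using assms(1) by (auto simp: valset_def lessThan_empty_iff)
    ultimately show "X \<in> {X. Max (valset \<theta> X) \<le> n}" by (auto simp: valset_def)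
  qed
  then have "?P (- {X. \<exists>i<\<theta>. n < X i}) \<le> ?P {X. Max (valset \<theta> X) \<le> n}"
    by (intro measure_pmf.finite_measure_mono) auto
  moreover have "?P (- {X. \<exists>i<\<theta>. n < X i}) = 1 - ?P {X. \<exists>i<\<theta>. n < X i}"
    using measure_pmf.prob_compl[of "{X. \<exists>i<\<theta>. n < X i}"] by (simp add: Compl_eq_Diff_UNIV)
  ultimately show ?thesis
    using prob_sample_some_greater_le[OF assms(2), of \<theta>] by linarith
qed

lemma hit_prob_ge_one_minus_exp:
  assumes "c \<le> real \<theta> * pj \<gamma> k"
  shows "1 - exp (- c) \<le> 1 - (1 - pj \<gamma> k) ^ \<theta>"
proof -
  have "(1 - pj \<gamma> k) ^ \<theta> \<le> exp (- (real \<theta> * pj \<gamma> k))"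
    using pj_nonneg[of k] pj_le_half[of k] by (intro pow_one_minus_le_exp) auto
  also have "\<dots> \<le> exp (- c)"
    using assms by simp
  finally show ?thesis by simp
qed

lemma hit_prob_low_value_ge:
  assumes "k \<in> {1..2 * nat \<lfloor>real \<theta> powr (1 / \<gamma>)\<rfloor>}"
  shows "1 - exp (- (Czeta \<gamma> / 2)) \<le> 1 - (1 - pj \<gamma> k) ^ \<theta>"
proof (rule hit_prob_ge_one_minus_exp)
  define x where "x = real \<theta> powr (1 / \<gamma>)"
  define j where "j = (k + 1) div 2"
  have "1 \<le> j" "j \<le> nat \<lfloor>x\<rfloor>"
    using assms unfolding j_def x_def by auto
  moreover have "real (nat \<lfloor>x\<rfloor>) \<le> x"
    unfolding x_def by (simp add: of_nat_floor)
  ultimately have j: "1 \<le> j" "real j \<le> x"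
    by linarith+
  then have "real j powr \<gamma> \<le> x powr \<gamma>"
    using gt1 by (intro powr_mono2) auto
  also have "\<dots> = real \<theta>"
    unfolding x_def using gt1 by (simp add: powr_powr)
  finally have "1 \<le> real \<theta> / real j powr \<gamma>"
    using j by simp
  then have "Czeta \<gamma> / 2 * 1 \<le> Czeta \<gamma> / 2 * (real \<theta> / real j powr \<gamma>)"
    using Czeta_pos by (intro mult_left_mono) auto
  also have "\<dots> = real \<theta> * pj \<gamma> k"
    using assms by (simp add: pj_def j_def powr_minus_divide)
  finally show "Czeta \<gamma> / 2 \<le> real \<theta> * pj \<gamma> k" by simp
qed

lemma hit_prob_first_pair_ge:
  assumes "2 \<le> \<theta>" "k \<in> {1, 2}"
  shows "1 - exp (- Czeta \<gamma>) \<le> 1 - (1 - pj \<gamma> k) ^ \<theta>"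
proof (rule hit_prob_ge_one_minus_exp)
  have pj: "pj \<gamma> k = Czeta \<gamma> / 2"
    using assms(2) by (auto simp: pj_def)
  have "2 * (Czeta \<gamma> / 2) \<le> real \<theta> * (Czeta \<gamma> / 2)"
    using assms(1) Czeta_pos by (intro mult_right_mono) auto
  then show "Czeta \<gamma> \<le> real \<theta> * pj \<gamma> k"
    unfolding pj by simp
qed

lemma sum_hit_probs_ge:
  assumes "1 \<le> \<theta>"
  defines "x \<equiv> real \<theta> powr (1 / \<gamma>)"
  shows "(1 - exp (- Czeta \<gamma>)) * x \<le> (\<Sum>k\<in>{1..2 * nat \<lfloor>x\<rfloor>}. 1 - (1 - pj \<gamma> k) ^ \<theta>)"
proof -
  define fl where "fl = nat \<lfloor>x\<rfloor>"
  define C where "C = Czeta \<gamma>"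
  define q where "q = exp (- (C / 2))"
  have C_pos: "0 < C" using Czeta_pos by (simp add: C_def)
  have "1 \<le> x" unfolding x_def using assms(1) gt1 by (intro ge_one_powr_ge_zero) auto
  then have fl: "1 \<le> fl" "x < real fl + 1"
    unfolding fl_def by linarith+
  have pj_1_2: "pj \<gamma> k = C / 2" if "k \<in> {1, 2}" for k
    using that by (auto simp: pj_def C_def)
  show ?thesis
  proof (cases "\<theta> = 1")
    case True
    then have "x = 1" "fl = 1" unfolding fl_def x_def by simp_all
    moreover have "1 - exp (- C) \<le> C" using exp_ge_add_one_self[of "- C"] by simp
    ultimately show ?thesis
      using True pj_1_2[of 1] pj_1_2[of 2] by (simp add: C_def numeral_2_eq_2)
  next
    case False
    \<comment> \<open>For \<theta> \<ge> 2 both values of the first pair are hit with probability at least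
      1 - exp (-C), which pays for the rounding loss x < \<lfloor>x\<rfloor> + 1.\<close>
    have exp_C: "exp (- C) = q\<^sup>2" unfolding q_def by (simp add: power2_eq_square flip: exp_add)
    have "2 \<le> \<theta>" using False assms(1) by simp
    then have near: "1 - q\<^sup>2 \<le> 1 - (1 - pj \<gamma> k) ^ \<theta>" if "k \<in> {1, 2}" for k
      using hit_prob_first_pair_ge[of \<theta> k] that exp_C by (simp add: C_def)
    have far: "1 - q \<le> 1 - (1 - pj \<gamma> k) ^ \<theta>" if "k \<in> {3..2 * fl}" for k
      using hit_prob_low_value_ge[of k \<theta>] that by (simp add: q_def C_def fl_def x_def)
    have "{1..2 * fl} = {1, 2} \<union> {3..2 * fl}" using fl(1) by auto
    then have "(\<Sum>k\<in>{1..2 * fl}. 1 - (1 - pj \<gamma> k) ^ \<theta>)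
        = (\<Sum>k\<in>{1, 2}. 1 - (1 - pj \<gamma> k) ^ \<theta>) + (\<Sum>k\<in>{3..2 * fl}. 1 - (1 - pj \<gamma> k) ^ \<theta>)"
      by (simp add: sum.union_disjoint)
    also have "\<dots> \<ge> (\<Sum>k\<in>{1, 2::nat}. 1 - q\<^sup>2) + (\<Sum>k\<in>{3..2 * fl}. 1 - q)"
      using near far by (intro add_mono sum_mono) auto
    finally have sum_ge: "2 * (1 - q\<^sup>2) + real (2 * fl - 2) * (1 - q)
        \<le> (\<Sum>k\<in>{1..2 * fl}. 1 - (1 - pj \<gamma> k) ^ \<theta>)"
      by simp
    have q: "0 \<le> q" "q \<le> 1" unfolding q_def using C_pos by auto
    have "1 - q\<^sup>2 \<le> 2 * (1 - q)"
      using zero_le_power2[of "1 - q"] by (simp add: power2_eq_square algebra_simps)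
    then have "(real fl - 1) * (1 - q\<^sup>2) \<le> (real fl - 1) * (2 * (1 - q))"
      using fl(1) by (intro mult_left_mono) auto
    moreover have "x * (1 - q\<^sup>2) \<le> (real fl + 1) * (1 - q\<^sup>2)"
      using fl(2) q by (intro mult_right_mono) (auto simp: power_le_one)
    ultimately have "x * (1 - q\<^sup>2) \<le> 2 * (1 - q\<^sup>2) + real (2 * fl - 2) * (1 - q)"
      using fl(1) by (simp add: of_nat_diff algebra_simps)
    with sum_ge exp_C show ?thesis
      by (simp add: C_def fl_def mult.commute)
  qed
qed

lemma prob_sample_misses_neg_corr:
  assumes "k \<noteq> l"
  shows "measure_pmf.prob (sample \<gamma> \<theta>) ({X. \<forall>i<\<theta>. X i \<notin> {k}} \<inter> {X. \<forall>i<\<theta>. X i \<notin> {l}})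
           \<le> measure_pmf.prob (sample \<gamma> \<theta>) {X. \<forall>i<\<theta>. X i \<notin> {k}}
             * measure_pmf.prob (sample \<gamma> \<theta>) {X. \<forall>i<\<theta>. X i \<notin> {l}}"
proof -
  have "{X. \<forall>i<\<theta>. X i \<notin> {k}} \<inter> {X. \<forall>i<\<theta>. X i \<notin> {l}} = {X. \<forall>i<\<theta>. X i \<notin> {k, l}}"
    by auto
  then have "measure_pmf.prob (sample \<gamma> \<theta>) ({X. \<forall>i<\<theta>. X i \<notin> {k}} \<inter> {X. \<forall>i<\<theta>. X i \<notin> {l}})
      = (1 - pj \<gamma> k - pj \<gamma> l) ^ \<theta>"
    using assms by (simp only: prob_sample_misses) (simp add: prob_zdist algebra_simps)
  also have "\<dots> \<le> ((1 - pj \<gamma> k) * (1 - pj \<gamma> l)) ^ \<theta>"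
    using pj_nonneg[of k] pj_nonneg[of l] pj_le_half[of k] pj_le_half[of l]
    by (intro power_mono) (auto simp: algebra_simps)
  finally show ?thesis
    by (simp only: prob_sample_misses) (simp add: prob_zdist power_mult_distrib)
qed

lemma prob_Nval_less_le:
  assumes "1 \<le> \<theta>"
  defines "a \<equiv> (1 - exp (- Czeta \<gamma>)) / 2 * real \<theta> powr (1 / \<gamma>)"
  shows "measure_pmf.prob (sample \<gamma> \<theta>) {X. real (Nval \<theta> X) < a} \<le> 2 / a"
proof -
  let ?P = "measure_pmf.prob (sample \<gamma> \<theta>)"
  define I where "I = {1..2 * nat \<lfloor>real \<theta> powr (1 / \<gamma>)\<rfloor>}"
  define M where "M = (\<lambda>k::nat. {X. \<forall>i<\<theta>. X i \<notin> {k}})"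
  define \<mu> where "\<mu> = (\<Sum>k\<in>I. 1 - ?P (M k))"
  have a_pos: "0 < a"
    unfolding a_def using Czeta_pos assms(1) by simp
  have "?P (M k) = (1 - pj \<gamma> k) ^ \<theta>" for k
    unfolding M_def prob_sample_misses by (simp add: prob_zdist)
  then have "2 * a \<le> \<mu>"
    using sum_hit_probs_ge[OF assms(1)] by (simp add: \<mu>_def a_def I_def)
  have "{X. real (Nval \<theta> X) < a} \<subseteq> {X. real (card {k\<in>I. X \<notin> M k}) < a}"
  proof safe
    fix X assume "real (Nval \<theta> X) < a"
    moreover have "card {k\<in>I. X \<notin> M k} \<le> Nval \<theta> X"
      unfolding Nval_def valset_def M_def by (intro card_mono) auto
    ultimately show "real (card {k\<in>I. X \<notin> M k}) < a" by linarith
  qed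
  then have "?P {X. real (Nval \<theta> X) < a} \<le> ?P {X. real (card {k\<in>I. X \<notin> M k}) < a}"
    by (intro measure_pmf.finite_measure_mono) auto
  also have "\<dots> \<le> \<mu> / (\<mu> - a)\<^sup>2"
    unfolding \<mu>_def M_def using \<open>2 * a \<le> \<mu>\<close> a_pos
    by (intro prob_card_notin_less_le prob_sample_misses_neg_corr) (auto simp: I_def \<mu>_def M_def)
  also have "\<dots> \<le> 2 / a"
  proof -
    have "0 \<le> (2 * \<mu> - a) * (\<mu> - 2 * a)" using \<open>2 * a \<le> \<mu>\<close> a_pos by simp
    then have "a * \<mu> \<le> 2 * (\<mu> - a)\<^sup>2" by (simp add: power2_eq_square algebra_simps)
    with \<open>2 * a \<le> \<mu>\<close> a_pos show ?thesis by (simp add: field_simps)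
  qed
  finally show ?thesis .
qed

lemma prob_Nval_ge:
  assumes "1 \<le> \<theta>"
  defines "c1 \<equiv> (1 - exp (- Czeta \<gamma>)) / 2"
  shows "measure_pmf.prob (sample \<gamma> \<theta>) {X. real (Nval \<theta> X) \<ge> c1 * real \<theta> powr (1 / \<gamma>)}
           \<ge> 1 - c1 powr (-2) * real \<theta> powr (- (2 / \<gamma> - 1))"
proof -
  let ?P = "measure_pmf.prob (sample \<gamma> \<theta>)"
  define x where "x = real \<theta> powr (1 / \<gamma>)"
  have c1: "0 < c1" "2 * c1 \<le> 1" unfolding c1_def using Czeta_pos by auto
  have x: "1 \<le> x" "x \<le> real \<theta>"
    unfolding x_def using assms gt1 powr_mono[of "1 / \<gamma>" 1 "real \<theta>"]
    by (auto intro: ge_one_powr_ge_zero)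
  have "real \<theta> powr (- (2 / \<gamma> - 1)) = real \<theta> / (x * x)"
    using assms by (simp add: x_def powr_diff powr_minus_divide flip: powr_add)
  moreover have "c1 powr (-2) = 1 / (c1 * c1)"
    using c1 by (simp add: powr_minus_divide power2_eq_square)
  moreover have "2 * c1 * x \<le> real \<theta>"
    using c1 x mult_right_mono[of "2 * c1" 1 x] by linarith
  then have "2 / (c1 * x) \<le> 1 / (c1 * c1) * (real \<theta> / (x * x))"
    using c1 x by (simp add: field_simps)
  ultimately have "?P {X. real (Nval \<theta> X) < c1 * x} \<le> c1 powr (-2) * real \<theta> powr (- (2 / \<gamma> - 1))"
    using prob_Nval_less_le[OF assms(1)] by (simp add: c1_def x_def)
  moreover have "?P {X. c1 * x \<le> real (Nval \<theta> X)} = 1 - ?P {X. real (Nval \<theta> X) < c1 * x}"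
    using measure_pmf.prob_compl[of "{X. real (Nval \<theta> X) < c1 * x}" "sample \<gamma> \<theta>"]
    by (simp add: Compl_eq_Diff_UNIV set_diff_eq not_less)
  ultimately show ?thesis
    unfolding x_def by linarith
qed

lemma prob_few_odd_gaps_confined_le:
  fixes \<theta> m :: nat
  assumes "10 \<le> n"
  defines "Q \<equiv> {X. real (oddgaps \<theta> X) \<le> real n / 5 \<and> Nval \<theta> X = n \<and> valset \<theta> X \<subseteq> {1..2 * m}}"
  shows "measure_pmf.prob (sample \<gamma> \<theta>) Q
           \<le> exp (- real n / 100) * measure_pmf.prob (sample \<gamma> \<theta>) {X. Nval \<theta> X = n}"
proof -
  define c where "c = exp (- real n / 100) * 2 ^ m"
  have flip_mem_Q: "flip_pairs A \<circ> X \<in> Q \<longleftrightarrow>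
      real (odd_gaps (flip_pairs A ` valset \<theta> X)) \<le> real n / 5 \<and> Nval \<theta> X = n \<and> valset \<theta> X \<subseteq> {1..2 * m}"
    for A X
    unfolding Q_def mem_Collect_eq oddgaps_eq_odd_gaps Nval_flip_pairs valset_flip_pairs
      flip_pairs_image_subset_atLeastAtMost_iff ..
  have "real (card (Pow {1..m})) * measure_pmf.prob (sample \<gamma> \<theta>) Q
      \<le> c * measure_pmf.prob (sample \<gamma> \<theta>) {X. Nval \<theta> X = n}"
  proof (rule card_mult_prob_le_by_invariance[where g = "\<lambda>A X. flip_pairs A \<circ> X"])
    show "map_pmf (\<lambda>X. flip_pairs A \<circ> X) (sample \<gamma> \<theta>) = sample \<gamma> \<theta>" for A
      by (rule map_pmf_flip_pairs_sample)
    show "real (card {A \<in> Pow {1..m}. flip_pairs A \<circ> X \<in> Q}) \<le> c * indicator {X. Nval \<theta> X = n} X" for X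
    proof (cases "Nval \<theta> X = n \<and> valset \<theta> X \<subseteq> {1..2 * m}")
      case False
      then have none: "{A \<in> Pow {1..m}. flip_pairs A \<circ> X \<in> Q} = {}"
        by (auto simp: flip_mem_Q)
      show ?thesis unfolding none by (simp add: c_def)
    next
      case True
      define s where "s = valset \<theta> X"
      have "finite s" "card s = n" and s: "s \<subseteq> {1..2 * m}"
        using True by (simp_all add: s_def valset_def Nval_def)
      moreover have "0 \<notin> s" using s by auto
      moreover have "pair_index ` s \<subseteq> {1..m}"
        using s mem_atLeastAtMost_iff_pair_index by blast
      ultimately have "real (card {A \<in> Pow {1..m}. real (odd_gaps (flip_pairs A ` s)) \<le> real n / 5})
          \<le> exp (- real n / 100) * 2 ^ card {1..m}"
        using assms by (intro card_flips_few_odd_gaps_le) auto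
      with True show ?thesis
        by (simp add: flip_mem_Q s_def c_def)
    qed
  qed simp
  then show ?thesis
    by (simp add: card_Pow c_def mult.assoc)
qed

lemma prob_few_odd_gaps_le:
  assumes "10 \<le> n" "1 \<le> m"
  shows "measure_pmf.prob (sample \<gamma> \<theta>) {X. real (oddgaps \<theta> X) \<le> real n / 5 \<and> Nval \<theta> X = n}
           \<le> exp (- real n / 100) * measure_pmf.prob (sample \<gamma> \<theta>) {X. Nval \<theta> X = n}
             + real \<theta> * (Czeta \<gamma> / (\<gamma> - 1) * real m powr (1 - \<gamma>))"
proof -
  let ?P = "measure_pmf.prob (sample \<gamma> \<theta>)"
  define Q where "Q = {X. real (oddgaps \<theta> X) \<le> real n / 5 \<and> Nval \<theta> X = n \<and> valset \<theta> X \<subseteq> {1..2 * m}}"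
  define far where "far = {X. \<exists>i\<in>{..<\<theta>}. X i \<in> - {1..2 * m}}"
  have "{X. real (oddgaps \<theta> X) \<le> real n / 5 \<and> Nval \<theta> X = n} \<subseteq> Q \<union> far"
    by (auto simp: Q_def far_def valset_def)
  then have "?P {X. real (oddgaps \<theta> X) \<le> real n / 5 \<and> Nval \<theta> X = n} \<le> ?P (Q \<union> far)"
    by (rule measure_pmf.finite_measure_mono) simp
  also have "\<dots> \<le> ?P Q + ?P far"
    by (rule measure_Un_le) simp_all
  also have "?P Q \<le> exp (- real n / 100) * ?P {X. Nval \<theta> X = n}"
    unfolding Q_def by (rule prob_few_odd_gaps_confined_le[OF assms(1)])
  also have "?P far \<le> real \<theta> * measure_pmf.prob (zdist \<gamma>) (- {1..2 * m})"
    using prob_Pi_pmf_ex_le[of "{..<\<theta>}" 0 "zdist \<gamma>" "- {1..2 * m}"]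
    unfolding far_def sample_def by simp
  also have "\<dots> \<le> real \<theta> * (Czeta \<gamma> / (\<gamma> - 1) * real m powr (1 - \<gamma>))"
    using assms(2) by (intro mult_left_mono prob_zdist_outside_le) auto
  finally show ?thesis by simp
qed

lemma prob_few_odd_gaps_cond_le:
  assumes "10 \<le> n"
  shows "measure_pmf.prob (sample \<gamma> \<theta>) {X. real (oddgaps \<theta> X) \<le> real n / 5 \<and> Nval \<theta> X = n}
           / measure_pmf.prob (sample \<gamma> \<theta>) {X. Nval \<theta> X = n} \<le> exp (- real n / 100)"
proof -
  let ?P = "measure_pmf.prob (sample \<gamma> \<theta>)"
  define K where "K = exp (- real n / 100) * ?P {X. Nval \<theta> X = n}"
  define B where "B = real \<theta> * (Czeta \<gamma> / (\<gamma> - 1))"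
  have "filterlim (\<lambda>m. real (Suc m)) at_top sequentially"
    by real_asymp
  then have "(\<lambda>m. real (Suc m) powr (1 - \<gamma>)) \<longlonglongrightarrow> 0"
    using gt1 by (intro tendsto_neg_powr) auto
  then have lim: "(\<lambda>m. K + B * real (Suc m) powr (1 - \<gamma>)) \<longlonglongrightarrow> K + B * 0"
    by (intro tendsto_intros)
  have few: "?P {X. real (oddgaps \<theta> X) \<le> real n / 5 \<and> Nval \<theta> X = n} \<le> K + B * 0"
    using prob_few_odd_gaps_le[OF assms, of "Suc _"]
    by (intro LIMSEQ_le_const[OF lim]) (auto simp: K_def B_def mult.assoc)
  show ?thesis
  proof (cases "?P {X. Nval \<theta> X = n} = 0")
    case False
    then have "0 < ?P {X. Nval \<theta> X = n}"
      using measure_nonneg[of "measure_pmf (sample \<gamma> \<theta>)"] by (simp add: order_less_le)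
    with few show ?thesis
      by (simp add: K_def pos_divide_le_eq mult.commute)
  qed simp
qed

end

theorem lemma5p6:
  fixes \<gamma> :: real and \<theta> :: nat
  assumes "1 < \<gamma>" "\<gamma> < 2" "1 \<le> \<theta>"
  defines "c1 \<equiv> (1 - exp (- Czeta \<gamma>)) / 2"
      and "c2 \<equiv> Czeta \<gamma> / (\<gamma> - 1)"
      and "P \<equiv> measure (measure_pmf (sample \<gamma> \<theta>))"
  shows "(P {X. real (Nval \<theta> X) \<ge> c1 * real \<theta> powr (1 / \<gamma>)}
           \<ge> 1 - c1 powr (-2) * real \<theta> powr (- (2 / \<gamma> - 1))) \<and>
         (\<forall>n::nat. 2 \<le> n \<longrightarrow>
           P {X. Max (valset \<theta> X) \<le> n}
             \<ge> 1 - c2 * real \<theta> * real (n div 2) powr (1 - \<gamma>)) \<and>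
         (\<forall>n::nat. 10 \<le> n \<and> n \<le> \<theta> \<longrightarrow>
           P {X. real (oddgaps \<theta> X) \<le> real n / 5 \<and> Nval \<theta> X = n}
             / P {X. Nval \<theta> X = n} \<le> exp (- real n / 100))"
proof (intro conjI allI impI)
  show "P {X. real (Nval \<theta> X) \<ge> c1 * real \<theta> powr (1 / \<gamma>)}
          \<ge> 1 - c1 powr (-2) * real \<theta> powr (- (2 / \<gamma> - 1))"
    unfolding P_def c1_def by (rule prob_Nval_ge[OF assms(1,3)])
next
  fix n :: nat
  assume "2 \<le> n"
  then show "P {X. Max (valset \<theta> X) \<le> n} \<ge> 1 - c2 * real \<theta> * real (n div 2) powr (1 - \<gamma>)"
    unfolding P_def c2_def by (rule prob_Max_valset_le[OF assms(1,3)])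
next
  fix n :: nat
  assume "10 \<le> n \<and> n \<le> \<theta>"
  then show "P {X. real (oddgaps \<theta> X) \<le> real n / 5 \<and> Nval \<theta> X = n} / P {X. Nval \<theta> X = n}
               \<le> exp (- real n / 100)"
    unfolding P_def by (intro prob_few_odd_gaps_cond_le[OF assms(1)]) simp
qed

end
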